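(* Let $\mathbf A=(A,\wedge,\vee,\cdot,1,\sim,-)$ be a DInFL-algebra and $W_{\mathbf A}$ the set of generalised prime filters of its lattice reduct. For $F,G\in W_{\mathbf A}$ define: $F\in\mathcal I$ iff $1\in F$; $F\preccurlyeq G$ iff $F\subseteq G$; $F\bullet G=\{H\in W_{\mathbf A}\mid F\cdot G\subseteq H\}$ where $F\cdot G=\{a\cdot b\mid a\in F,b\in G\}$; $F^\sim=\{{\sim}a\mid a\notin F\}$; $F^-=\{-a\mid a\notin F\}$. Then $(W_{\mathbf A},\mathcal I,\preccurlyeq,\bullet,{}^\sim,{}^-)$ is a DInFL-frame whose poset has least element $\varnothing$ and greatest element $A$, and in which $\mathcal I$ is a proper non-empty upset; i.e. it is a doubly-pointed DInFL-frame with bounds $\varnothing$ and $A$.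
   Context: An InFL-algebra is $(A,\wedge,\vee,\cdot,1,\sim,-)$ with a lattice, a monoid, and $a\cdot b\leqslant c\iff a\leqslant -(b\cdot{\sim}c)\iff b\leqslant{\sim}(-c\cdot a)$; DInFL means distributive lattice reduct. A generalised prime filter is a prime filter, or $A$, or $\varnothing$. For a set $W$ and $\circ:W\times W\to\mathcal P(W)$, $U\circ V=\bigcup\{a\circ b\mid a\in U,b\in V\}$, $x\circ V=\{x\}\circ V$, $U\circ y=U\circ\{y\}$; $x^{\sim-}$ means $(x^\sim)^-$. A DInFL-frame is a tuple $(W,I,\preccurlyeq,\circ,{}^\sim,{}^-)$ with $I\subseteq W$, $\preccurlyeq$ a partial order, $\circ:W\times W\to\mathcal P(W)$, ${}^\sim,{}^-:W\to W$, such that for all $u,v,x,y,z$: (F1) $x\preccurlyeq y$ iff $y\in I\circ x$ iff $y\in x\circ I$; (F2) $x\preccurlyeq y$, $x\in I$ imply $y\in I$; (F3) $x\preccurlyeq y$, $x\in u\circ v$ imply $y\in u\circ v$; (F4) $(x\circ y)\circ z=x\circ(y\circ z)$; (F5) $z^\sim\in x\circ y$ iff $y^-\in z\circ x$; (F6) $x^{\sim-}\preccurlyeq x$ and $x^{-\sim}\preccurlyeq x$. A doubly-pointed DInFL-frame is a DInFL-frame whose poset is bounded and whose set $I$ is a proper non-empty upset. *)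

theory Defs
  imports Main
begin

text \<open>An algebra (A, meet, join, mult, one, tld, mn) whose universe is the whole type 'a.
  tld is the involution written with a tilde, mn the one written with a minus.\<close>

definition lat_le :: "('a \<Rightarrow> 'a \<Rightarrow> 'a) \<Rightarrow> 'a \<Rightarrow> 'a \<Rightarrow> bool" where
  "lat_le meet a b \<longleftrightarrow> meet a b = a"

definition is_lattice :: "('a \<Rightarrow> 'a \<Rightarrow> 'a) \<Rightarrow> ('a \<Rightarrow> 'a \<Rightarrow> 'a) \<Rightarrow> bool" where
  "is_lattice meet join \<longleftrightarrow>
     (\<forall>a b c. meet (meet a b) c = meet a (meet b c)) \<and>
     (\<forall>a b c. join (join a b) c = join a (join b c)) \<and>
     (\<forall>a b. meet a b = meet b a) \<and>
     (\<forall>a b. join a b = join b a) \<and>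
     (\<forall>a. meet a a = a) \<and>
     (\<forall>a. join a a = a) \<and>
     (\<forall>a b. meet a (join a b) = a) \<and>
     (\<forall>a b. join a (meet a b) = a)"

definition is_monoid :: "('a \<Rightarrow> 'a \<Rightarrow> 'a) \<Rightarrow> 'a \<Rightarrow> bool" where
  "is_monoid mult one \<longleftrightarrow>
     (\<forall>a b c. mult (mult a b) c = mult a (mult b c)) \<and>
     (\<forall>a. mult one a = a) \<and> (\<forall>a. mult a one = a)"

definition InFL_algebra ::
  "('a \<Rightarrow> 'a \<Rightarrow> 'a) \<Rightarrow> ('a \<Rightarrow> 'a \<Rightarrow> 'a) \<Rightarrow> ('a \<Rightarrow> 'a \<Rightarrow> 'a) \<Rightarrow> 'a
   \<Rightarrow> ('a \<Rightarrow> 'a) \<Rightarrow> ('a \<Rightarrow> 'a) \<Rightarrow> bool" where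
  "InFL_algebra meet join mult one tld mn \<longleftrightarrow>
     is_lattice meet join \<and> is_monoid mult one \<and>
     (\<forall>a b c. (lat_le meet (mult a b) c \<longleftrightarrow> lat_le meet a (mn (mult b (tld c)))) \<and>
              (lat_le meet a (mn (mult b (tld c))) \<longleftrightarrow> lat_le meet b (tld (mult (mn c) a))))"

definition DInFL_algebra ::
  "('a \<Rightarrow> 'a \<Rightarrow> 'a) \<Rightarrow> ('a \<Rightarrow> 'a \<Rightarrow> 'a) \<Rightarrow> ('a \<Rightarrow> 'a \<Rightarrow> 'a) \<Rightarrow> 'a
   \<Rightarrow> ('a \<Rightarrow> 'a) \<Rightarrow> ('a \<Rightarrow> 'a) \<Rightarrow> bool" where
  "DInFL_algebra meet join mult one tld mn \<longleftrightarrow>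
     InFL_algebra meet join mult one tld mn \<and>
     (\<forall>a b c. meet a (join b c) = join (meet a b) (meet a c))"

definition prime_filter :: "('a \<Rightarrow> 'a \<Rightarrow> 'a) \<Rightarrow> ('a \<Rightarrow> 'a \<Rightarrow> 'a) \<Rightarrow> 'a set \<Rightarrow> bool" where
  "prime_filter meet join F \<longleftrightarrow>
     F \<noteq> {} \<and> F \<noteq> UNIV \<and>
     (\<forall>a b. a \<in> F \<and> lat_le meet a b \<longrightarrow> b \<in> F) \<and>
     (\<forall>a b. a \<in> F \<and> b \<in> F \<longrightarrow> meet a b \<in> F) \<and>
     (\<forall>a b. join a b \<in> F \<longrightarrow> a \<in> F \<or> b \<in> F)"

definition gen_prime_filters :: "('a \<Rightarrow> 'a \<Rightarrow> 'a) \<Rightarrow> ('a \<Rightarrow> 'a \<Rightarrow> 'a) \<Rightarrow> 'a set set" where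
  "gen_prime_filters meet join = {F. prime_filter meet join F \<or> F = UNIV \<or> F = {}}"

definition set_op :: "('w \<Rightarrow> 'w \<Rightarrow> 'w set) \<Rightarrow> 'w set \<Rightarrow> 'w set \<Rightarrow> 'w set" where
  "set_op c U V = \<Union>{c a b | a b. a \<in> U \<and> b \<in> V}"

definition DInFL_frame ::
  "'w set \<Rightarrow> 'w set \<Rightarrow> ('w \<Rightarrow> 'w \<Rightarrow> bool) \<Rightarrow> ('w \<Rightarrow> 'w \<Rightarrow> 'w set)
   \<Rightarrow> ('w \<Rightarrow> 'w) \<Rightarrow> ('w \<Rightarrow> 'w) \<Rightarrow> bool" where
  "DInFL_frame W I le c tld mn \<longleftrightarrow>
     I \<subseteq> W \<and>
     \<comment> \<open>partial order on W\<close>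
     (\<forall>x\<in>W. le x x) \<and>
     (\<forall>x\<in>W. \<forall>y\<in>W. le x y \<and> le y x \<longrightarrow> x = y) \<and>
     (\<forall>x\<in>W. \<forall>y\<in>W. \<forall>z\<in>W. le x y \<and> le y z \<longrightarrow> le x z) \<and>
     \<comment> \<open>typing: c maps into P(W), tld and mn map W to W\<close>
     (\<forall>x\<in>W. \<forall>y\<in>W. c x y \<subseteq> W) \<and>
     (\<forall>x\<in>W. tld x \<in> W) \<and> (\<forall>x\<in>W. mn x \<in> W) \<and>
     \<comment> \<open>F1\<close>
     (\<forall>x\<in>W. \<forall>y\<in>W. (le x y \<longleftrightarrow> y \<in> set_op c I {x}) \<and> (y \<in> set_op c I {x} \<longleftrightarrow> y \<in> set_op c {x} I)) \<and>
     \<comment> \<open>F2\<close>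
     (\<forall>x\<in>W. \<forall>y\<in>W. le x y \<and> x \<in> I \<longrightarrow> y \<in> I) \<and>
     \<comment> \<open>F3\<close>
     (\<forall>u\<in>W. \<forall>v\<in>W. \<forall>x\<in>W. \<forall>y\<in>W. le x y \<and> x \<in> c u v \<longrightarrow> y \<in> c u v) \<and>
     \<comment> \<open>F4\<close>
     (\<forall>x\<in>W. \<forall>y\<in>W. \<forall>z\<in>W. set_op c (c x y) {z} = set_op c {x} (c y z)) \<and>
     \<comment> \<open>F5\<close>
     (\<forall>x\<in>W. \<forall>y\<in>W. \<forall>z\<in>W. tld z \<in> c x y \<longleftrightarrow> mn y \<in> c z x) \<and>
     \<comment> \<open>F6\<close>
     (\<forall>x\<in>W. le (mn (tld x)) x \<and> le (tld (mn x)) x)"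

definition doubly_pointed_DInFL_frame_with_bounds ::
  "'w set \<Rightarrow> 'w set \<Rightarrow> ('w \<Rightarrow> 'w \<Rightarrow> bool) \<Rightarrow> ('w \<Rightarrow> 'w \<Rightarrow> 'w set)
   \<Rightarrow> ('w \<Rightarrow> 'w) \<Rightarrow> ('w \<Rightarrow> 'w) \<Rightarrow> 'w \<Rightarrow> 'w \<Rightarrow> bool" where
  "doubly_pointed_DInFL_frame_with_bounds W I le c tld mn bt tp \<longleftrightarrow>
     DInFL_frame W I le c tld mn \<and>
     bt \<in> W \<and> tp \<in> W \<and> (\<forall>x\<in>W. le bt x \<and> le x tp) \<and>
     I \<noteq> {} \<and> I \<noteq> W \<and> (\<forall>x\<in>I. \<forall>y\<in>W. le x y \<longrightarrow> y \<in> I)"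

definition cfI :: "('a \<Rightarrow> 'a \<Rightarrow> 'a) \<Rightarrow> ('a \<Rightarrow> 'a \<Rightarrow> 'a) \<Rightarrow> 'a \<Rightarrow> 'a set set" where
  "cfI meet join one = {F \<in> gen_prime_filters meet join. one \<in> F}"

definition cf_circ :: "('a \<Rightarrow> 'a \<Rightarrow> 'a) \<Rightarrow> ('a \<Rightarrow> 'a \<Rightarrow> 'a) \<Rightarrow> ('a \<Rightarrow> 'a \<Rightarrow> 'a)
   \<Rightarrow> 'a set \<Rightarrow> 'a set \<Rightarrow> 'a set set" where
  "cf_circ meet join mult F G =
     {H \<in> gen_prime_filters meet join. {mult a b | a b. a \<in> F \<and> b \<in> G} \<subseteq> H}"

definition cf_neg :: "('a \<Rightarrow> 'a) \<Rightarrow> 'a set \<Rightarrow> 'a set" where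
  "cf_neg n F = {n a | a. a \<notin> F}"

end

theory Submission
  imports Defs
begin

text \<open>In an involutive FL-algebra the residuation laws at the unit give \<open>\<sim>-a = a = -\<sim>a\<close> and
  \<open>\<sim>1 = -1\<close>, so \<open>\<sim>\<close> and \<open>-\<close> are mutually inverse order anti-automorphisms. Hence
  \<open>F \<mapsto> F\<^sup>\<sim>\<close> and \<open>F \<mapsto> F\<^sup>-\<close> are mutually inverse maps of generalised prime filters,
  and F5 is a residuation calculation. F1 and F4 need generalised prime filters to exist: if a
  filter \<open>D\<close> satisfies \<open>D \<cdot> F \<subseteq> H\<close>, a Zorn-maximal filter above \<open>D\<close> with the same property
  is prime, because the lattice is distributive and multiplication preserves joins. Finally,
  reversing the multiplication and swapping \<open>\<sim>\<close> with \<open>-\<close> gives again a DInFL-algebra, so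
  only one half of F1 and of F4 has to be proved.\<close>

definition lat_filter :: "('a \<Rightarrow> 'a \<Rightarrow> 'a) \<Rightarrow> 'a set \<Rightarrow> bool" where
  "lat_filter meet F \<longleftrightarrow>
     (\<forall>a b. a \<in> F \<and> lat_le meet a b \<longrightarrow> b \<in> F) \<and> (\<forall>a b. a \<in> F \<and> b \<in> F \<longrightarrow> meet a b \<in> F)"

definition join_prime :: "('a \<Rightarrow> 'a \<Rightarrow> 'a) \<Rightarrow> 'a set \<Rightarrow> bool" where
  "join_prime join F \<longleftrightarrow> (\<forall>a b. join a b \<in> F \<longrightarrow> a \<in> F \<or> b \<in> F)"

lemma mem_gen_prime_filters_iff:
  "F \<in> gen_prime_filters meet join \<longleftrightarrow> lat_filter meet F \<and> join_prime join F"
  unfolding gen_prime_filters_def prime_filter_def lat_filter_def join_prime_def by auto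

lemma lat_filterI:
  assumes "\<And>a b. a \<in> F \<Longrightarrow> lat_le meet a b \<Longrightarrow> b \<in> F"
    and "\<And>a b. a \<in> F \<Longrightarrow> b \<in> F \<Longrightarrow> meet a b \<in> F"
  shows "lat_filter meet F"
  using assms unfolding lat_filter_def by blast

lemma lat_filter_up: "lat_filter meet F \<Longrightarrow> a \<in> F \<Longrightarrow> lat_le meet a b \<Longrightarrow> b \<in> F"
  unfolding lat_filter_def by blast

lemma lat_filter_meet: "lat_filter meet F \<Longrightarrow> a \<in> F \<Longrightarrow> b \<in> F \<Longrightarrow> meet a b \<in> F"
  unfolding lat_filter_def by blast

lemma gen_prime_filters_up:
  "F \<in> gen_prime_filters meet join \<Longrightarrow> a \<in> F \<Longrightarrow> lat_le meet a b \<Longrightarrow> b \<in> F"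
  unfolding mem_gen_prime_filters_iff lat_filter_def by blast

lemma lat_filter_Union_chain:
  assumes "\<And>K. K \<in> C \<Longrightarrow> lat_filter meet K" and "subset.chain A C"
  shows "lat_filter meet (\<Union>C)"
  unfolding lat_filter_def
proof (intro conjI allI impI)
  fix a b assume "a \<in> \<Union>C \<and> b \<in> \<Union>C"
  then obtain X Y where "X \<in> C" "Y \<in> C" "a \<in> X" "b \<in> Y" by blast
  moreover have "X \<subseteq> Y \<or> Y \<subseteq> X" using \<open>X \<in> C\<close> \<open>Y \<in> C\<close> assms(2) by (auto simp: subset_chain_def)
  ultimately show "meet a b \<in> \<Union>C" using assms(1) unfolding lat_filter_def by blast
qed (use assms(1) in \<open>auto simp: lat_filter_def\<close>)

lemma mem_set_op: "z \<in> set_op c U V \<longleftrightarrow> (\<exists>a\<in>U. \<exists>b\<in>V. z \<in> c a b)"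
  unfolding set_op_def by blast

lemma mem_cf_circ:
  "H \<in> cf_circ meet join mult F G \<longleftrightarrow> H \<in> gen_prime_filters meet join \<and> (\<forall>a\<in>F. \<forall>b\<in>G. mult a b \<in> H)"
  unfolding cf_circ_def by blast

locale dinfl_algebra =
  fixes meet join mult :: "'a \<Rightarrow> 'a \<Rightarrow> 'a" and one :: 'a and tld mn :: "'a \<Rightarrow> 'a"
  assumes DInFL: "DInFL_algebra meet join mult one tld mn"
begin

abbreviation le :: "'a \<Rightarrow> 'a \<Rightarrow> bool" (infix "\<preceq>" 50) where
  "a \<preceq> b \<equiv> lat_le meet a b"

lemma is_lattice_meet_join: "is_lattice meet join"
  and meet_join_distrib: "meet a (join b c) = join (meet a b) (meet a c)"
  and residuation_left: "mult a b \<preceq> c \<longleftrightarrow> a \<preceq> mn (mult b (tld c))"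
  and residuation_right: "mult a b \<preceq> c \<longleftrightarrow> b \<preceq> tld (mult (mn c) a)"
  and mult_assoc: "mult (mult a b) c = mult a (mult b c)"
  and mult_one_left: "mult one a = a" and mult_one_right: "mult a one = a"
  using DInFL unfolding DInFL_algebra_def InFL_algebra_def is_monoid_def by blast+

lemma class_lattice: "class.lattice meet (\<preceq>) (\<lambda>a b. a \<preceq> b \<and> a \<noteq> b) join"
proof -
  have meet_assoc: "\<And>a b c. meet (meet a b) c = meet a (meet b c)"
    and meet_comm: "\<And>a b. meet a b = meet b a" and join_comm: "\<And>a b. join a b = join b a"
    and join_assoc: "\<And>a b c. join (join a b) c = join a (join b c)"
    and meet_idem: "\<And>a. meet a a = a"
    and meet_absorb: "\<And>a b. meet a (join a b) = a" and join_absorb: "\<And>a b. join a (meet a b) = a"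
    using is_lattice_meet_join unfolding is_lattice_def by blast+
  have le_iff_join: "a \<preceq> b \<longleftrightarrow> join a b = b" for a b
    unfolding lat_le_def by (metis meet_absorb join_absorb meet_comm join_comm)
  have antisym: "a = b" if "a \<preceq> b" "b \<preceq> a" for a b
    using that unfolding lat_le_def by (metis meet_comm)
  show ?thesis
  proof unfold_locales
    show "a \<preceq> a" for a by (simp add: lat_le_def meet_idem)
    show "(a \<preceq> b \<and> a \<noteq> b) = (a \<preceq> b \<and> \<not> b \<preceq> a)" for a b using antisym by blast
    show "a \<preceq> b \<Longrightarrow> b \<preceq> c \<Longrightarrow> a \<preceq> c" for a b c unfolding lat_le_def by (metis meet_assoc)
    show "a \<preceq> b \<Longrightarrow> b \<preceq> a \<Longrightarrow> a = b" for a b by (rule antisym)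
    show "meet a b \<preceq> a" for a b unfolding lat_le_def by (metis meet_assoc meet_comm meet_idem)
    show "meet a b \<preceq> b" for a b unfolding lat_le_def by (metis meet_assoc meet_idem)
    show "a \<preceq> b \<Longrightarrow> a \<preceq> c \<Longrightarrow> a \<preceq> meet b c" for a b c unfolding lat_le_def by (metis meet_assoc)
    show "a \<preceq> join a b" for a b unfolding lat_le_def by (rule meet_absorb)
    show "b \<preceq> join a b" for a b unfolding lat_le_def by (metis meet_absorb join_comm)
    show "b \<preceq> a \<Longrightarrow> c \<preceq> a \<Longrightarrow> join b c \<preceq> a" for a b c unfolding le_iff_join by (metis join_assoc)
  qed
qed

sublocale lat: lattice meet "(\<preceq>)" "\<lambda>a b. a \<preceq> b \<and> a \<noteq> b" join
  by (rule class_lattice)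

lemma tld_mn [simp]: "tld (mn a) = a"
proof -
  have "b \<preceq> a \<longleftrightarrow> b \<preceq> tld (mn a)" for b
    using residuation_right[of one b a] by (simp add: mult_one_left mult_one_right)
  then show ?thesis by (metis lat.order_antisym lat.order_refl)
qed

lemma mn_tld [simp]: "mn (tld a) = a"
proof -
  have "b \<preceq> a \<longleftrightarrow> b \<preceq> mn (tld a)" for b
    using residuation_left[of b one a] by (simp add: mult_one_left mult_one_right)
  then show ?thesis by (metis lat.order_antisym lat.order_refl)
qed

lemma le_mn_iff_le_tld: "a \<preceq> mn b \<longleftrightarrow> b \<preceq> tld a"
proof -
  have le_mn: "a \<preceq> mn b \<longleftrightarrow> mult a b \<preceq> mn one" for a b
    using residuation_left[of a b "mn one"] by (simp add: mult_one_right)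
  have le_tld: "b \<preceq> tld a \<longleftrightarrow> mult a b \<preceq> tld one" for a b
    using residuation_right[of a b "tld one"] by (simp add: mult_one_left)
  have "tld one \<preceq> mn one"
    using le_mn[of one "tld one"] by (simp add: mult_one_left)
  moreover have "mn one \<preceq> tld one"
    using le_tld[of one "mn one"] by (simp add: mult_one_right)
  ultimately have "tld one = mn one"
    by (rule lat.order_antisym)
  then show ?thesis using le_mn[of a b] le_tld[of b a] by simp
qed

lemma mn_antimono: "a \<preceq> b \<Longrightarrow> mn b \<preceq> mn a"
  by (simp add: le_mn_iff_le_tld)

lemma tld_antimono: "a \<preceq> b \<Longrightarrow> tld b \<preceq> tld a"
  by (metis le_mn_iff_le_tld mn_tld)

lemma mn_join: "mn (join a b) = meet (mn a) (mn b)"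
proof (rule lat.order_antisym)
  show "mn (join a b) \<preceq> meet (mn a) (mn b)"
    by (simp add: lat.le_infI mn_antimono)
  show "meet (mn a) (mn b) \<preceq> mn (join a b)"
    by (metis le_mn_iff_le_tld lat.le_supI lat.inf_le1 lat.inf_le2)
qed

lemma mn_meet: "mn (meet a b) = join (mn a) (mn b)"
proof (rule lat.order_antisym)
  have "tld (join (mn a) (mn b)) \<preceq> meet a b"
    by (metis lat.sup_ge1 lat.sup_ge2 lat.le_infI tld_antimono tld_mn)
  then show "mn (meet a b) \<preceq> join (mn a) (mn b)"
    by (metis mn_antimono mn_tld)
  show "join (mn a) (mn b) \<preceq> mn (meet a b)"
    by (simp add: lat.le_supI mn_antimono)
qed

lemma mult_mono_left: "a \<preceq> a' \<Longrightarrow> mult a b \<preceq> mult a' b"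
  by (meson lat.order_refl lat.order_trans residuation_left)

lemma mult_mono_right: "b \<preceq> b' \<Longrightarrow> mult a b \<preceq> mult a b'"
  by (meson lat.order_refl lat.order_trans residuation_right)

lemma mult_mono: "a \<preceq> a' \<Longrightarrow> b \<preceq> b' \<Longrightarrow> mult a b \<preceq> mult a' b'"
  by (rule lat.order_trans[OF mult_mono_left mult_mono_right])

lemma mult_join_left_le: "mult (join a b) c \<preceq> join (mult a c) (mult b c)"
proof -
  let ?J = "join (mult a c) (mult b c)"
  have "a \<preceq> mn (mult c (tld ?J))" "b \<preceq> mn (mult c (tld ?J))"
    by (rule residuation_left[THEN iffD1, OF lat.sup_ge1], rule residuation_left[THEN iffD1, OF lat.sup_ge2])
  then show ?thesis by (simp add: residuation_left)
qed

lemma le_mn_mult_iff: "h \<preceq> mn (mult f g) \<longleftrightarrow> g \<preceq> tld (mult h f)"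
  using le_mn_iff_le_tld residuation_right[of f g "tld h"] by simp

lemma dinfl_opposite: "dinfl_algebra meet join (\<lambda>a b. mult b a) one mn tld"
  unfolding dinfl_algebra_def DInFL_algebra_def InFL_algebra_def is_monoid_def
  using is_lattice_meet_join meet_join_distrib residuation_left residuation_right
  by (simp add: mult_assoc mult_one_left mult_one_right)

lemma cf_circ_flip: "cf_circ meet join (\<lambda>a b. mult b a) F G = cf_circ meet join mult G F"
proof -
  have "{mult b a | a b. a \<in> F \<and> b \<in> G} = {mult a b | a b. a \<in> G \<and> b \<in> F}" by blast
  then show ?thesis by (simp add: cf_circ_def)
qed

lemma set_op_cf_circ_flip:
  "set_op (cf_circ meet join (\<lambda>a b. mult b a)) U V = set_op (cf_circ meet join mult) V U"
  by (auto simp: set_eq_iff mem_set_op mem_cf_circ)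

abbreviation W :: "'a set set" where
  "W \<equiv> gen_prime_filters meet join"

lemma lat_filter_principal: "lat_filter meet {b. a \<preceq> b}"
proof (rule lat_filterI)
  show "c \<in> {b. a \<preceq> b}" if "b \<in> {b. a \<preceq> b}" "b \<preceq> c" for b c
    using lat.order_trans[of a b c] that by simp
  show "meet b c \<in> {b. a \<preceq> b}" if "b \<in> {b. a \<preceq> b}" "c \<in> {b. a \<preceq> b}" for b c
    using lat.le_infI[of a b c] that by simp
qed

lemma lat_filter_adjoin:
  assumes M: "lat_filter meet M"
  shows "lat_filter meet {x. \<exists>m\<in>M. meet m a \<preceq> x}" (is "lat_filter meet ?Ma")
proof (rule lat_filterI)
  fix x y assume "x \<in> ?Ma" "y \<in> ?Ma"
  then obtain m1 m2 where m: "m1 \<in> M" "m2 \<in> M" "meet m1 a \<preceq> x" "meet m2 a \<preceq> y" by blast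
  have "meet (meet m1 m2) a \<preceq> meet m1 a" "meet (meet m1 m2) a \<preceq> meet m2 a"
    by (intro lat.inf_mono lat.inf_le1 lat.inf_le2 lat.order_refl)+
  then have "meet (meet m1 m2) a \<preceq> meet x y"
    using m(3,4) by (intro lat.le_infI) (erule lat.order_trans, assumption)+
  moreover have "meet m1 m2 \<in> M" using M m(1,2) by (rule lat_filter_meet)
  ultimately show "meet x y \<in> ?Ma" by blast
next
  fix x y assume "x \<in> ?Ma" "x \<preceq> y"
  then obtain m where "m \<in> M" "meet m a \<preceq> x" by blast
  then show "y \<in> ?Ma" using lat.order_trans[OF _ \<open>x \<preceq> y\<close>] by blast
qed

lemma lat_filter_upset_products:
  assumes F: "lat_filter meet F" and G: "lat_filter meet G"
  shows "lat_filter meet {d. \<exists>a\<in>F. \<exists>b\<in>G. mult a b \<preceq> d}" (is "lat_filter meet ?S")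
proof (rule lat_filterI)
  fix x y assume "x \<in> ?S" "y \<in> ?S"
  then obtain a1 b1 a2 b2 where ab: "a1 \<in> F" "b1 \<in> G" "mult a1 b1 \<preceq> x"
    "a2 \<in> F" "b2 \<in> G" "mult a2 b2 \<preceq> y" by blast
  have "mult (meet a1 a2) (meet b1 b2) \<preceq> mult a1 b1" "mult (meet a1 a2) (meet b1 b2) \<preceq> mult a2 b2"
    by (intro mult_mono lat.inf_le1 lat.inf_le2)+
  then have "mult (meet a1 a2) (meet b1 b2) \<preceq> meet x y"
    using ab(3,6) by (intro lat.le_infI) (erule lat.order_trans, assumption)+
  moreover have "meet a1 a2 \<in> F" "meet b1 b2 \<in> G"
    using lat_filter_meet[OF F ab(1,4)] lat_filter_meet[OF G ab(2,5)] .
  ultimately show "meet x y \<in> ?S" by blast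
next
  fix x y assume "x \<in> ?S" "x \<preceq> y"
  then obtain a b where "a \<in> F" "b \<in> G" "mult a b \<preceq> x" by blast
  then show "y \<in> ?S" using lat.order_trans[OF _ \<open>x \<preceq> y\<close>] by blast
qed

lemma maximal_filter_join_prime:
  assumes H: "H \<in> W" and F: "lat_filter meet F" and M: "lat_filter meet M"
    and MF: "\<And>m f. m \<in> M \<Longrightarrow> f \<in> F \<Longrightarrow> mult m f \<in> H"
    and unextendable: "\<And>a. a \<notin> M \<Longrightarrow> \<exists>m\<in>M. \<exists>f\<in>F. mult (meet m a) f \<notin> H"
  shows "join_prime join M"
  unfolding join_prime_def
proof (intro allI impI, rule ccontr)
  fix a b assume ab: "join a b \<in> M" and "\<not> (a \<in> M \<or> b \<in> M)"
  then obtain m1 f1 m2 f2 where m1: "m1 \<in> M" "f1 \<in> F" "mult (meet m1 a) f1 \<notin> H"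
    and m2: "m2 \<in> M" "f2 \<in> F" "mult (meet m2 b) f2 \<notin> H"
    using unextendable by meson
  define m f where "m = meet m1 m2" and "f = meet f1 f2"
  have "mult (meet m a) f \<preceq> mult (meet m1 a) f1" "mult (meet m b) f \<preceq> mult (meet m2 b) f2"
    unfolding m_def f_def by (intro mult_mono lat.inf_mono lat.inf_le1 lat.inf_le2 lat.order_refl)+
  then have "mult (meet m a) f \<notin> H" "mult (meet m b) f \<notin> H"
    using m1 m2 gen_prime_filters_up[OF H] by blast+
  then have "join (mult (meet m a) f) (mult (meet m b) f) \<notin> H"
    using H by (auto simp: mem_gen_prime_filters_iff join_prime_def)
  moreover have "mult (meet m (join a b)) f \<preceq> join (mult (meet m a) f) (mult (meet m b) f)"
    by (simp add: meet_join_distrib mult_join_left_le)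
  moreover have "mult (meet m (join a b)) f \<in> H"
    using MF M F ab m1 m2 unfolding m_def f_def by (meson lat_filter_meet)
  ultimately show False using gen_prime_filters_up[OF H] by blast
qed

lemma prime_extension:
  assumes H: "H \<in> W" and F: "lat_filter meet F" and D: "lat_filter meet D"
    and DF: "\<And>d f. d \<in> D \<Longrightarrow> f \<in> F \<Longrightarrow> mult d f \<in> H"
  shows "\<exists>K\<in>W. D \<subseteq> K \<and> (\<forall>k\<in>K. \<forall>f\<in>F. mult k f \<in> H)"
proof (cases "D = {}")
  case True
  then show ?thesis unfolding gen_prime_filters_def by blast
next
  case False
  define Ext where "Ext = {K. D \<subseteq> K \<and> lat_filter meet K \<and> (\<forall>k\<in>K. \<forall>f\<in>F. mult k f \<in> H)}"
  have "\<exists>M\<in>Ext. \<forall>X\<in>Ext. M \<subseteq> X \<longrightarrow> X = M"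
  proof (rule subset_Zorn_nonempty)
    show "Ext \<noteq> {}" using D DF unfolding Ext_def by blast
  next
    fix C assume "C \<noteq> {}" and chain: "subset.chain Ext C"
    then have "C \<subseteq> Ext" by (simp add: subset_chain_def)
    have "D \<subseteq> \<Union>C" using \<open>C \<noteq> {}\<close> \<open>C \<subseteq> Ext\<close> unfolding Ext_def by blast
    moreover have "lat_filter meet (\<Union>C)"
      using \<open>C \<subseteq> Ext\<close> by (intro lat_filter_Union_chain[OF _ chain]) (auto simp: Ext_def)
    moreover have "\<forall>k\<in>\<Union>C. \<forall>f\<in>F. mult k f \<in> H" using \<open>C \<subseteq> Ext\<close> unfolding Ext_def by blast
    ultimately show "\<Union>C \<in> Ext" unfolding Ext_def by blast
  qed
  then obtain M where "M \<in> Ext" and maximal: "\<And>X. X \<in> Ext \<Longrightarrow> M \<subseteq> X \<Longrightarrow> X = M"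
    by blast
  then have M: "D \<subseteq> M" "lat_filter meet M" and MF: "\<forall>k\<in>M. \<forall>f\<in>F. mult k f \<in> H"
    by (simp_all add: Ext_def)
  have unextendable: "\<exists>m\<in>M. \<exists>f\<in>F. mult (meet m a) f \<notin> H" if "a \<notin> M" for a
  proof (rule ccontr)
    assume extendable: "\<not> ?thesis"
    define Ma where "Ma = {x. \<exists>m\<in>M. meet m a \<preceq> x}"
    have "M \<subseteq> Ma" unfolding Ma_def using lat.inf_le1[of _ a] by blast
    moreover have "mult k f \<in> H" if "k \<in> Ma" "f \<in> F" for k f
    proof -
      obtain m where "m \<in> M" "meet m a \<preceq> k" using \<open>k \<in> Ma\<close> unfolding Ma_def by blast
      then have "mult (meet m a) f \<in> H" using extendable \<open>f \<in> F\<close> by blast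
      then show ?thesis using gen_prime_filters_up[OF H] mult_mono_left[OF \<open>meet m a \<preceq> k\<close>] by blast
    qed
    moreover have "lat_filter meet Ma" unfolding Ma_def by (rule lat_filter_adjoin[OF M(2)])
    ultimately have "Ma \<in> Ext" using M(1) unfolding Ext_def by blast
    then have "Ma = M" using maximal \<open>M \<subseteq> Ma\<close> by blast
    moreover have "a \<in> Ma" unfolding Ma_def using False M(1) lat.inf_le2[of _ a] by blast
    ultimately show False using \<open>a \<notin> M\<close> by blast
  qed
  have "join_prime join M"
    by (rule maximal_filter_join_prime[OF H F M(2)]) (use MF unextendable in blast)+
  then have "M \<in> W"
    by (simp add: mem_gen_prime_filters_iff M(2))
  then show ?thesis using M(1) MF by blast
qed

lemma cf_neg_tld_mem: "t \<in> cf_neg tld F \<longleftrightarrow> mn t \<notin> F"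
  unfolding cf_neg_def by (auto intro!: exI[of _ "mn t"])

lemma cf_neg_tld_in_W:
  assumes F: "F \<in> W"
  shows "cf_neg tld F \<in> W"
proof -
  have F_filter: "lat_filter meet F" and F_prime: "join_prime join F"
    using F by (simp_all add: mem_gen_prime_filters_iff)
  have "lat_filter meet {t. mn t \<notin> F}"
  proof (rule lat_filterI)
    fix a b assume "a \<in> {t. mn t \<notin> F}" "a \<preceq> b"
    then show "b \<in> {t. mn t \<notin> F}"
      using lat_filter_up[OF F_filter _ mn_antimono] by blast
  next
    fix a b assume "a \<in> {t. mn t \<notin> F}" "b \<in> {t. mn t \<notin> F}"
    then show "meet a b \<in> {t. mn t \<notin> F}"
      using F_prime by (auto simp: mn_meet join_prime_def)
  qed
  moreover have "join_prime join {t. mn t \<notin> F}"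
    unfolding join_prime_def mem_Collect_eq mn_join using lat_filter_meet[OF F_filter] by blast
  moreover have "cf_neg tld F = {t. mn t \<notin> F}"
    by (auto simp: cf_neg_tld_mem)
  ultimately show ?thesis by (simp add: mem_gen_prime_filters_iff)
qed

lemmas cf_neg_mn_mem = dinfl_algebra.cf_neg_tld_mem[OF dinfl_opposite]
lemmas cf_neg_mn_in_W = dinfl_algebra.cf_neg_tld_in_W[OF dinfl_opposite]

lemma cf_neg_mn_cf_neg_tld: "cf_neg mn (cf_neg tld F) = F"
  by (auto simp: cf_neg_mn_mem cf_neg_tld_mem)

lemmas cf_neg_tld_cf_neg_mn = dinfl_algebra.cf_neg_mn_cf_neg_tld[OF dinfl_opposite]

lemma subset_iff_mem_cfI_circ:
  assumes x: "x \<in> W" and y: "y \<in> W"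
  shows "x \<subseteq> y \<longleftrightarrow> y \<in> set_op (cf_circ meet join mult) (cfI meet join one) {x}"
proof -
  have "y \<in> set_op (cf_circ meet join mult) (cfI meet join one) {x} \<longleftrightarrow>
      (\<exists>K\<in>W. one \<in> K \<and> (\<forall>k\<in>K. \<forall>f\<in>x. mult k f \<in> y))"
    using y by (auto simp: mem_set_op cfI_def mem_cf_circ)
  also have "\<dots> \<longleftrightarrow> x \<subseteq> y"
  proof
    assume "\<exists>K\<in>W. one \<in> K \<and> (\<forall>k\<in>K. \<forall>f\<in>x. mult k f \<in> y)"
    then show "x \<subseteq> y" by (auto simp: mult_one_left)
  next
    assume "x \<subseteq> y"
    have "\<exists>K\<in>W. {b. one \<preceq> b} \<subseteq> K \<and> (\<forall>k\<in>K. \<forall>f\<in>x. mult k f \<in> y)"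
    proof (rule prime_extension[OF y _ lat_filter_principal])
      show "lat_filter meet x" using x by (simp add: mem_gen_prime_filters_iff)
      fix d f assume "d \<in> {b. one \<preceq> b}" "f \<in> x"
      then show "mult d f \<in> y"
        using gen_prime_filters_up[OF y _ mult_mono_left[of one d f]] \<open>x \<subseteq> y\<close>
        by (auto simp: mult_one_left)
    qed
    then show "\<exists>K\<in>W. one \<in> K \<and> (\<forall>k\<in>K. \<forall>f\<in>x. mult k f \<in> y)"
      using lat.order_refl[of one] by blast
  qed
  finally show ?thesis by blast
qed

lemma cf_circ_assoc_subset:
  assumes x: "x \<in> W" and y: "y \<in> W" and z: "z \<in> W"
  shows "set_op (cf_circ meet join mult) {x} (cf_circ meet join mult y z)
    \<subseteq> set_op (cf_circ meet join mult) (cf_circ meet join mult x y) {z}"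
proof
  fix H assume "H \<in> set_op (cf_circ meet join mult) {x} (cf_circ meet join mult y z)"
  then obtain K where K: "\<forall>b\<in>y. \<forall>c\<in>z. mult b c \<in> K"
    and H: "H \<in> W" "\<forall>a\<in>x. \<forall>k\<in>K. mult a k \<in> H"
    by (auto simp: mem_set_op mem_cf_circ)
  define D where "D = {d. \<exists>a\<in>x. \<exists>b\<in>y. mult a b \<preceq> d}"
  have "\<exists>K'\<in>W. D \<subseteq> K' \<and> (\<forall>k\<in>K'. \<forall>c\<in>z. mult k c \<in> H)"
  proof (rule prime_extension[OF H(1)])
    show "lat_filter meet z" using z by (simp add: mem_gen_prime_filters_iff)
    show "lat_filter meet D"
      unfolding D_def using x y by (intro lat_filter_upset_products) (simp_all add: mem_gen_prime_filters_iff)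
    fix d c assume "d \<in> D" "c \<in> z"
    then obtain a b where ab: "a \<in> x" "b \<in> y" "mult a b \<preceq> d" unfolding D_def by blast
    have "mult a (mult b c) \<preceq> mult d c"
      using mult_mono_left[OF ab(3)] by (simp add: mult_assoc)
    moreover have "mult a (mult b c) \<in> H" using K H(2) ab(1,2) \<open>c \<in> z\<close> by blast
    ultimately show "mult d c \<in> H" using gen_prime_filters_up[OF H(1)] by blast
  qed
  then obtain K' where "K' \<in> W" "D \<subseteq> K'" and K'H: "\<forall>k\<in>K'. \<forall>c\<in>z. mult k c \<in> H" by blast
  moreover have "mult a b \<in> D" if "a \<in> x" "b \<in> y" for a b
    unfolding D_def using that lat.order_refl by blast
  ultimately have "K' \<in> cf_circ meet join mult x y" "H \<in> cf_circ meet join mult K' z"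
    using H(1) by (auto simp: mem_cf_circ)
  then show "H \<in> set_op (cf_circ meet join mult) (cf_circ meet join mult x y) {z}"
    by (auto simp: mem_set_op)
qed

lemma cf_neg_mem_cf_circ_iff:
  assumes x: "x \<in> W" and y: "y \<in> W" and z: "z \<in> W"
  shows "cf_neg tld z \<in> cf_circ meet join mult x y \<longleftrightarrow> cf_neg mn y \<in> cf_circ meet join mult z x"
proof -
  have "cf_neg tld z \<in> cf_circ meet join mult x y \<longleftrightarrow> \<not> (\<exists>f\<in>x. \<exists>g\<in>y. mn (mult f g) \<in> z)"
    using cf_neg_tld_in_W[OF z] by (auto simp: mem_cf_circ cf_neg_tld_mem)
  also have "(\<exists>f\<in>x. \<exists>g\<in>y. mn (mult f g) \<in> z) \<longleftrightarrow> (\<exists>h\<in>z. \<exists>f\<in>x. tld (mult h f) \<in> y)"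
  proof
    assume "\<exists>f\<in>x. \<exists>g\<in>y. mn (mult f g) \<in> z"
    then obtain f g where "f \<in> x" "g \<in> y" "mn (mult f g) \<in> z" by blast
    moreover have "g \<preceq> tld (mult (mn (mult f g)) f)"
      by (simp flip: le_mn_mult_iff)
    ultimately show "\<exists>h\<in>z. \<exists>f\<in>x. tld (mult h f) \<in> y"
      using gen_prime_filters_up[OF y] by blast
  next
    assume "\<exists>h\<in>z. \<exists>f\<in>x. tld (mult h f) \<in> y"
    then obtain h f where "h \<in> z" "f \<in> x" "tld (mult h f) \<in> y" by blast
    moreover have "h \<preceq> mn (mult f (tld (mult h f)))"
      by (simp add: le_mn_mult_iff)
    ultimately show "\<exists>f\<in>x. \<exists>g\<in>y. mn (mult f g) \<in> z"
      using gen_prime_filters_up[OF z] by blast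
  qed
  also have "\<not> (\<exists>h\<in>z. \<exists>f\<in>x. tld (mult h f) \<in> y) \<longleftrightarrow> cf_neg mn y \<in> cf_circ meet join mult z x"
    using cf_neg_mn_in_W[OF y] by (auto simp: mem_cf_circ cf_neg_mn_mem)
  finally show ?thesis .
qed

lemma canonical_frame_DInFL_frame:
  "DInFL_frame W (cfI meet join one) (\<subseteq>) (cf_circ meet join mult) (cf_neg tld) (cf_neg mn)"
proof -
  let ?c = "cf_circ meet join mult" and ?I = "cfI meet join one"
  have unit: "x \<subseteq> y \<longleftrightarrow> y \<in> set_op ?c ?I {x}" "x \<subseteq> y \<longleftrightarrow> y \<in> set_op ?c {x} ?I"
    if "x \<in> W" "y \<in> W" for x y
    using subset_iff_mem_cfI_circ[OF that] dinfl_algebra.subset_iff_mem_cfI_circ[OF dinfl_opposite that]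
    by (simp_all add: cf_circ_flip set_op_cf_circ_flip)
  have assoc: "set_op ?c (?c x y) {z} = set_op ?c {x} (?c y z)" if "x \<in> W" "y \<in> W" "z \<in> W" for x y z
    using cf_circ_assoc_subset[OF that] dinfl_algebra.cf_circ_assoc_subset[OF dinfl_opposite that(3,2,1)]
    by (simp add: cf_circ_flip set_op_cf_circ_flip)
  have "\<forall>x\<in>W. \<forall>y\<in>W. (x \<subseteq> y \<longleftrightarrow> y \<in> set_op ?c ?I {x}) \<and>
      (y \<in> set_op ?c ?I {x} \<longleftrightarrow> y \<in> set_op ?c {x} ?I)"
    using unit by blast
  moreover have "\<forall>x\<in>W. \<forall>y\<in>W. \<forall>z\<in>W. set_op ?c (?c x y) {z} = set_op ?c {x} (?c y z)"
    using assoc by blast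
  moreover have "\<forall>x\<in>W. \<forall>y\<in>W. \<forall>z\<in>W. cf_neg tld z \<in> ?c x y \<longleftrightarrow> cf_neg mn y \<in> ?c z x"
    using cf_neg_mem_cf_circ_iff by blast
  moreover have "\<forall>x\<in>W. cf_neg mn (cf_neg tld x) \<subseteq> x \<and> cf_neg tld (cf_neg mn x) \<subseteq> x"
    by (simp add: cf_neg_mn_cf_neg_tld cf_neg_tld_cf_neg_mn)
  moreover have "\<forall>x\<in>W. cf_neg tld x \<in> W" "\<forall>x\<in>W. cf_neg mn x \<in> W"
    by (simp_all add: cf_neg_tld_in_W cf_neg_mn_in_W)
  moreover have "?I \<subseteq> W" "\<forall>x\<in>W. \<forall>y\<in>W. ?c x y \<subseteq> W"
    by (auto simp: cfI_def mem_cf_circ)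
  moreover have "\<forall>x\<in>W. \<forall>y\<in>W. x \<subseteq> y \<and> x \<in> ?I \<longrightarrow> y \<in> ?I"
    by (auto simp: cfI_def)
  moreover have "\<forall>u\<in>W. \<forall>v\<in>W. \<forall>x\<in>W. \<forall>y\<in>W. x \<subseteq> y \<and> x \<in> ?c u v \<longrightarrow> y \<in> ?c u v"
    by (auto simp: mem_cf_circ)
  ultimately show ?thesis
    unfolding DInFL_frame_def by (intro conjI) (assumption | blast)+
qed

lemma canonical_frame_doubly_pointed:
  "doubly_pointed_DInFL_frame_with_bounds W (cfI meet join one) (\<subseteq>) (cf_circ meet join mult)
     (cf_neg tld) (cf_neg mn) {} UNIV"
proof -
  have "{} \<in> W" "UNIV \<in> W" by (simp_all add: gen_prime_filters_def)
  then show ?thesis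
    unfolding doubly_pointed_DInFL_frame_with_bounds_def
    using canonical_frame_DInFL_frame by (auto simp: cfI_def)
qed

end

theorem mainTheorem18:
  fixes meet join mult :: "'a \<Rightarrow> 'a \<Rightarrow> 'a" and one :: 'a and tld mn :: "'a \<Rightarrow> 'a"
  assumes "DInFL_algebra meet join mult one tld mn"
  shows "doubly_pointed_DInFL_frame_with_bounds (gen_prime_filters meet join)
           (cfI meet join one) (\<subseteq>) (cf_circ meet join mult) (cf_neg tld) (cf_neg mn)
           {} UNIV"
  using assms by (intro dinfl_algebra.canonical_frame_doubly_pointed dinfl_algebra.intro)

end
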